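(* Let $\mathcal{P}$ be a finite poset and $L=\mathfrak{g}^{\prec}(\mathcal{P})$. Then (i) $b(L)\le |\{p\prec q : p\prec q\notin Rel_E(\mathcal{P})\}|-1$, and (ii) $b(L)\le |Rel_{\overline{C}}(\mathcal{P})|$.
   Context: All Lie algebras are over an algebraically closed field $\mathbf{k}$ of characteristic zero. A finite poset $(\mathcal{P},\preceq)$ has underlying set $\{1,\dots,n\}$, labeled so that $x\preceq y$ implies $x\le y$ as integers. Write $x\prec y$ if $x\preceq y$ and $x\ne y$. $Ext(\mathcal{P})$ is the set of minimal and maximal elements of $\mathcal{P}$, and $Rel_E(\mathcal{P})$ is the set of strict relations $p\prec q$ with $p,q\in Ext(\mathcal{P})$. A strict relation $p\prec q$ is covering if there is no $z$ with $p\prec z\prec q$; $Rel_{\overline{C}}(\mathcal{P})$ is the set of non-covering strict relations. The nilpotent Lie poset algebra $\mathfrak{g}^{\prec}(\mathcal{P})$ is the Lie subalgebra of $\mathfrak{gl}(n,\mathbf{k})$ spanned by the matrix units $E_{i,j}$ with $i\prec j$, with bracket $[X,Y]=XY-YX$. The breadth of a Lie algebra $L$ is $b(L)=\max_{x\in L}\operatorname{rank}(\mathrm{ad}_x)$, where $\mathrm{ad}_x=[x,-]$. *)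

theory Defs
  imports Main "HOL-Computational_Algebra.Polynomial" "HOL-Library.Function_Algebras"
begin

text \<open>A finite poset on {1..n} is given by its (reflexive) order relation R,
  a partial order on {1..n}; labelling condition: (x,y) in R implies x \<le> y.\<close>

definition strict_rel :: "(nat \<times> nat) set \<Rightarrow> (nat \<times> nat) set" where
  "strict_rel R = {(x, y). (x, y) \<in> R \<and> x \<noteq> y}"

definition minimal_elts :: "nat set \<Rightarrow> (nat \<times> nat) set \<Rightarrow> nat set" where
  "minimal_elts A R = {x \<in> A. \<not> (\<exists>y. (y, x) \<in> strict_rel R)}"

definition maximal_elts :: "nat set \<Rightarrow> (nat \<times> nat) set \<Rightarrow> nat set" where
  "maximal_elts A R = {x \<in> A. \<not> (\<exists>y. (x, y) \<in> strict_rel R)}"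

definition Ext :: "nat set \<Rightarrow> (nat \<times> nat) set \<Rightarrow> nat set" where
  "Ext A R = minimal_elts A R \<union> maximal_elts A R"

definition Rel_E :: "nat set \<Rightarrow> (nat \<times> nat) set \<Rightarrow> (nat \<times> nat) set" where
  "Rel_E A R = {(p, q) \<in> strict_rel R. p \<in> Ext A R \<and> q \<in> Ext A R}"

definition Rel_nonC :: "(nat \<times> nat) set \<Rightarrow> (nat \<times> nat) set" where
  "Rel_nonC R = {(p, q) \<in> strict_rel R. \<exists>z. (p, z) \<in> strict_rel R \<and> (z, q) \<in> strict_rel R}"

text \<open>n x n matrices over 'k with indices 1..n, as functions; the product sums over 1..n.\<close>

definition mat_mult :: "nat \<Rightarrow> (nat \<Rightarrow> nat \<Rightarrow> 'k::field) \<Rightarrow> (nat \<Rightarrow> nat \<Rightarrow> 'k) \<Rightarrow> (nat \<Rightarrow> nat \<Rightarrow> 'k)" where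
  "mat_mult n X Y = (\<lambda>i j. \<Sum>k\<in>{1..n}. X i k * Y k j)"

definition mat_bracket :: "nat \<Rightarrow> (nat \<Rightarrow> nat \<Rightarrow> 'k::field) \<Rightarrow> (nat \<Rightarrow> nat \<Rightarrow> 'k) \<Rightarrow> (nat \<Rightarrow> nat \<Rightarrow> 'k)" where
  "mat_bracket n X Y = (\<lambda>i j. mat_mult n X Y i j - mat_mult n Y X i j)"

definition mat_scale :: "'k::field \<Rightarrow> (nat \<Rightarrow> nat \<Rightarrow> 'k) \<Rightarrow> (nat \<Rightarrow> nat \<Rightarrow> 'k)" where
  "mat_scale c X = (\<lambda>i j. c * X i j)"

text \<open>The nilpotent Lie poset algebra: span of E_{ij} with i \<prec> j, i.e. the matrices
  whose entries vanish outside the strict relations.\<close>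

definition poset_lie_alg :: "(nat \<times> nat) set \<Rightarrow> (nat \<Rightarrow> nat \<Rightarrow> 'k::field) set" where
  "poset_lie_alg R = {X. \<forall>i j. (i, j) \<notin> strict_rel R \<longrightarrow> X i j = 0}"

definition ad_rank :: "nat \<Rightarrow> (nat \<Rightarrow> nat \<Rightarrow> 'k::field) set \<Rightarrow> (nat \<Rightarrow> nat \<Rightarrow> 'k) \<Rightarrow> nat" where
  "ad_rank n L x = vector_space.dim mat_scale ((mat_bracket n x) ` L)"

definition breadth :: "nat \<Rightarrow> (nat \<Rightarrow> nat \<Rightarrow> 'k::field) set \<Rightarrow> nat" where
  "breadth n L = Max (ad_rank n L ` L)"

end

theory Submission
  imports Defs
begin

text \<open>Every \<open>y \<in> L\<close> is \<open>\<Sum> y\<^sub>e E\<^sub>e\<close> over the strict relations \<open>e\<close>, where \<open>E\<^sub>e\<close> are the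
  matrix units. For \<open>e = (p, q) \<in> Rel_E\<close> the unit \<open>E\<^sub>e\<close> is central in \<open>L\<close>, since nothing
  lies strictly below \<open>p\<close> or above \<open>q\<close>. Hence \<open>ad\<^sub>x\<close> maps \<open>L\<close> into the span of the
  \<open>[x, E\<^sub>e]\<close> with \<open>e \<notin> Rel_E\<close>, and one of these is redundant: \<open>[x, x] = 0\<close> expresses it
  through the others, unless \<open>x\<close> is supported on \<open>Rel_E\<close>, in which case \<open>x\<close> is central and
  \<open>ad\<^sub>x = 0\<close>. This gives (i). For (ii), transitivity and antisymmetry make every entry of
  \<open>[x, y]\<close> vanish outside the non-covering relations, so \<open>ad\<^sub>x\<close> maps \<open>L\<close> into the span of
  their matrix units.\<close>

lemma vector_space_mat_scale: "vector_space (mat_scale :: 'k::field \<Rightarrow> (nat \<Rightarrow> nat \<Rightarrow> 'k) \<Rightarrow> _)"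
  by unfold_locales (auto simp: mat_scale_def fun_eq_iff algebra_simps)

interpretation mat: vector_space "mat_scale :: 'k::field \<Rightarrow> (nat \<Rightarrow> nat \<Rightarrow> 'k) \<Rightarrow> _"
  by (rule vector_space_mat_scale)

definition mat_unit :: "nat \<times> nat \<Rightarrow> (nat \<Rightarrow> nat \<Rightarrow> 'k::field)" where
  "mat_unit e = (\<lambda>i j. if (i, j) = e then 1 else 0)"

lemma sum_fun_apply2: "(\<Sum>a\<in>A. f a) x y = (\<Sum>a\<in>A. f a x y)"
  by (induction A rule: infinite_finite_induct) auto

lemma mat_eq_sum_mat_units:
  fixes M :: "nat \<Rightarrow> nat \<Rightarrow> 'k::field"
  assumes "finite F" and "\<And>i j. (i, j) \<notin> F \<Longrightarrow> M i j = 0"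
  shows "M = (\<Sum>e\<in>F. mat_scale (case_prod M e) (mat_unit e))"
proof (intro ext)
  fix i j
  have "(\<Sum>e\<in>F. mat_scale (case_prod M e) (mat_unit e)) i j
      = (\<Sum>e\<in>F. if e = (i, j) then case_prod M e else 0)"
    by (auto simp: sum_fun_apply2 mat_scale_def mat_unit_def intro!: sum.cong)
  also have "\<dots> = M i j"
    using assms by simp
  finally show "M i j = (\<Sum>e\<in>F. mat_scale (case_prod M e) (mat_unit e)) i j" ..
qed

lemma poset_lie_alg_eq_sum_mat_units:
  assumes "y \<in> poset_lie_alg R" and "finite (strict_rel R)"
  shows "y = (\<Sum>e\<in>strict_rel R. mat_scale (case_prod y e) (mat_unit e))"
  using assms by (intro mat_eq_sum_mat_units) (auto simp: poset_lie_alg_def)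

lemma mat_bracket_apply:
  "mat_bracket n x y i j = (\<Sum>k\<in>{1..n}. x i k * y k j) - (\<Sum>k\<in>{1..n}. y i k * x k j)"
  unfolding mat_bracket_def mat_mult_def ..

lemma mat_bracket_add_right: "mat_bracket n x (a + b) = mat_bracket n x a + mat_bracket n x b"
  by (auto simp: mat_bracket_apply fun_eq_iff algebra_simps sum.distrib)

lemma mat_bracket_scale_right: "mat_bracket n x (mat_scale c a) = mat_scale c (mat_bracket n x a)"
  by (auto simp: mat_bracket_apply mat_scale_def fun_eq_iff algebra_simps sum_distrib_left)

lemma mat_bracket_zero_right: "mat_bracket n x 0 = 0"
  by (auto simp: mat_bracket_apply fun_eq_iff)

lemma mat_bracket_sum_right:
  "mat_bracket n x (\<Sum>e\<in>A. f e) = (\<Sum>e\<in>A. mat_bracket n x (f e))"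
proof (induction A rule: infinite_finite_induct)
  case (insert a F)
  then show ?case by (metis sum.insert mat_bracket_add_right)
next
  case infinite
  then show ?case by (metis sum.infinite mat_bracket_zero_right)
next
  case empty
  then show ?case by (metis sum.empty mat_bracket_zero_right)
qed

lemma mat_bracket_self: "mat_bracket n x x = 0"
  by (auto simp: mat_bracket_def fun_eq_iff)

lemma mat_bracket_anticomm: "mat_bracket n y x = - mat_bracket n x y"
  by (auto simp: mat_bracket_def fun_eq_iff)

lemma mat_bracket_mat_unit:
  "mat_bracket n x (mat_unit (p, q)) i j =
     (if j = q \<and> p \<in> {1..n} then x i p else 0) - (if i = p \<and> q \<in> {1..n} then x q j else 0)"
proof -
  have "(\<Sum>k\<in>{1..n}. x i k * mat_unit (p, q) k j)
      = (\<Sum>k\<in>{1..n}. if k = p then (if j = q then x i p else 0) else 0)"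
    by (rule sum.cong) (auto simp: mat_unit_def)
  moreover have "(\<Sum>k\<in>{1..n}. mat_unit (p, q) i k * x k j)
      = (\<Sum>k\<in>{1..n}. if k = q then (if i = p then x q j else 0) else 0)"
    by (rule sum.cong) (auto simp: mat_unit_def)
  ultimately show ?thesis
    unfolding mat_bracket_apply by (simp only: sum.delta finite_atLeastAtMost) simp
qed

lemma mat_bracket_mat_unit_Rel_E:
  assumes "y \<in> poset_lie_alg R" and "e \<in> Rel_E A R"
  shows "mat_bracket n y (mat_unit e) = 0"
proof -
  obtain p q where e: "e = (p, q)" by (cases e)
  have "(i, p) \<notin> strict_rel R" "(q, j) \<notin> strict_rel R" for i j
    using assms(2) unfolding e Rel_E_def Ext_def minimal_elts_def maximal_elts_def by blast+
  then have "y i p = 0" "y q j = 0" for i j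
    using assms(1) by (auto simp: poset_lie_alg_def)
  then show ?thesis
    by (auto simp: fun_eq_iff e mat_bracket_mat_unit)
qed

lemma mat_bracket_eq_sum_off_Rel_E:
  assumes "finite (strict_rel R)" and "x \<in> poset_lie_alg R" and "y \<in> poset_lie_alg R"
  shows "mat_bracket n x y =
    (\<Sum>e\<in>strict_rel R - Rel_E A R. mat_scale (case_prod y e) (mat_bracket n x (mat_unit e)))"
proof -
  let ?t = "\<lambda>e. mat_scale (case_prod y e) (mat_bracket n x (mat_unit e))"
  have Rel_E_sub: "Rel_E A R \<subseteq> strict_rel R"
    unfolding Rel_E_def by auto
  have "mat_bracket n x y = (\<Sum>e\<in>strict_rel R. ?t e)"
    by (subst poset_lie_alg_eq_sum_mat_units[OF assms(3,1)])
      (simp add: mat_bracket_sum_right mat_bracket_scale_right)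
  also have "\<dots> = (\<Sum>e\<in>strict_rel R - Rel_E A R. ?t e) + (\<Sum>e\<in>Rel_E A R. ?t e)"
    using sum.subset_diff[OF Rel_E_sub assms(1)] .
  also have "(\<Sum>e\<in>Rel_E A R. ?t e) = 0"
    using assms(2) by (simp add: mat_bracket_mat_unit_Rel_E)
  finally show ?thesis by simp
qed

lemma mat_bracket_eq_zero_if_supported_on_Rel_E:
  assumes "finite (Rel_E A R)" and "\<And>i j. (i, j) \<notin> Rel_E A R \<Longrightarrow> x i j = 0"
    and "y \<in> poset_lie_alg R"
  shows "mat_bracket n x y = 0"
proof -
  have x_eq: "x = (\<Sum>e\<in>Rel_E A R. mat_scale (case_prod x e) (mat_unit e))"
    using assms(1,2) by (rule mat_eq_sum_mat_units)
  have "mat_bracket n y x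
      = (\<Sum>e\<in>Rel_E A R. mat_scale (case_prod x e) (mat_bracket n y (mat_unit e)))"
    by (subst x_eq) (simp add: mat_bracket_sum_right mat_bracket_scale_right)
  also have "\<dots> = 0"
    using assms(3) by (simp add: mat_bracket_mat_unit_Rel_E)
  finally show ?thesis
    by (simp add: mat_bracket_anticomm[of n x y])
qed

lemma ad_rank_le_card:
  fixes L :: "(nat \<Rightarrow> nat \<Rightarrow> 'k::field) set"
  assumes "finite F" and "mat_bracket n x ` L \<subseteq> mat.span (f ` F)"
  shows "ad_rank n L x \<le> card F"
proof -
  have "ad_rank n L x \<le> card (f ` F)"
    unfolding ad_rank_def using assms by (intro mat.dim_le_card) auto
  also have "\<dots> \<le> card F"
    using assms(1) by (rule card_image_le)
  finally show ?thesis .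
qed

lemma ad_rank_le_card_diff_Rel_E:
  fixes R :: "(nat \<times> nat) set" and x :: "nat \<Rightarrow> nat \<Rightarrow> 'k::field"
  assumes fin: "finite (strict_rel R)" and x: "x \<in> poset_lie_alg R"
  shows "ad_rank n (poset_lie_alg R) x \<le> card (strict_rel R - Rel_E A R) - 1"
proof -
  define S where "S = strict_rel R - Rel_E A R"
  define G where "G = (\<lambda>e. mat_bracket n x (mat_unit e))"
  have "finite S"
    using fin by (simp add: S_def)
  have ad_eq: "mat_bracket n x y = (\<Sum>e\<in>S. mat_scale (case_prod y e) (G e))"
    if "y \<in> poset_lie_alg R" for y
    unfolding S_def G_def using fin x that by (rule mat_bracket_eq_sum_off_Rel_E)
  show ?thesis
  proof (cases "\<exists>e\<in>S. case_prod x e \<noteq> 0")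
    case True
    then obtain e0 where e0: "e0 \<in> S" "case_prod x e0 \<noteq> 0" by blast
    have "0 = mat_bracket n x x"
      by (simp add: mat_bracket_self)
    also have "\<dots> = mat_scale (case_prod x e0) (G e0)
        + (\<Sum>e\<in>S - {e0}. mat_scale (case_prod x e) (G e))"
      using ad_eq[OF x] sum.remove[OF \<open>finite S\<close> e0(1)] by simp
    finally have "G e0 = mat_scale (- inverse (case_prod x e0))
        (\<Sum>e\<in>S - {e0}. mat_scale (case_prod x e) (G e))"
      using e0(2) by (auto simp: mat_scale_def fun_eq_iff field_simps add_eq_0_iff)
    also have "\<dots> \<in> mat.span (G ` (S - {e0}))"
      by (intro mat.span_scale mat.span_sum mat.span_base) auto
    finally have G_span: "G e \<in> mat.span (G ` (S - {e0}))" if "e \<in> S" for e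
      using that by (cases "e = e0") (auto intro: mat.span_base)
    have "mat_bracket n x ` poset_lie_alg R \<subseteq> mat.span (G ` (S - {e0}))"
      by (auto simp: ad_eq intro!: mat.span_sum mat.span_scale G_span)
    then have "ad_rank n (poset_lie_alg R) x \<le> card (S - {e0})"
      using \<open>finite S\<close> by (intro ad_rank_le_card) auto
    then show ?thesis
      using e0(1) \<open>finite S\<close> by (simp add: S_def)
  next
    case False
    have "finite (Rel_E A R)"
      using fin by (rule finite_subset[rotated]) (auto simp: Rel_E_def)
    moreover have "x i j = 0" if "(i, j) \<notin> Rel_E A R" for i j
      using False x that by (cases "(i, j) \<in> strict_rel R") (force simp: S_def poset_lie_alg_def)+
    ultimately have "mat_bracket n x ` poset_lie_alg R \<subseteq> mat.span (mat_unit ` {})"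
      by (auto simp: mat_bracket_eq_zero_if_supported_on_Rel_E)
    then have "ad_rank n (poset_lie_alg R) x \<le> card ({} :: (nat \<times> nat) set)"
      by (rule ad_rank_le_card[rotated]) simp
    then show ?thesis by simp
  qed
qed

lemma mat_bracket_vanishes_off_Rel_nonC:
  assumes "antisym R" and "trans R"
    and "x \<in> poset_lie_alg R" and "y \<in> poset_lie_alg R"
    and "(i, j) \<notin> Rel_nonC R"
  shows "mat_bracket n x y i j = 0"
proof -
  have no_chain: "(i, k) \<notin> strict_rel R \<or> (k, j) \<notin> strict_rel R" for k
  proof (rule ccontr)
    assume "\<not> ?thesis"
    then have ik: "(i, k) \<in> strict_rel R" and kj: "(k, j) \<in> strict_rel R" by auto
    then have "(i, j) \<in> R"
      using \<open>trans R\<close> unfolding strict_rel_def by (auto elim: transE)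
    moreover have "i \<noteq> j"
      using ik kj \<open>antisym R\<close> unfolding strict_rel_def by (auto dest: antisymD)
    ultimately show False
      using ik kj assms(5) unfolding Rel_nonC_def strict_rel_def by blast
  qed
  have products_vanish: "x i k * y k j = 0" "y i k * x k j = 0" for k
    using no_chain[of k] assms(3,4) by (auto simp: poset_lie_alg_def)
  show ?thesis
    unfolding mat_bracket_apply products_vanish by simp
qed

lemma ad_rank_le_card_Rel_nonC:
  fixes R :: "(nat \<times> nat) set" and x :: "nat \<Rightarrow> nat \<Rightarrow> 'k::field"
  assumes "antisym R" and "trans R" and fin: "finite (strict_rel R)"
    and x: "x \<in> poset_lie_alg R"
  shows "ad_rank n (poset_lie_alg R) x \<le> card (Rel_nonC R)"
proof (rule ad_rank_le_card[where f = mat_unit])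
  show fin_nonC: "finite (Rel_nonC R)"
    using fin by (rule finite_subset[rotated]) (auto simp: Rel_nonC_def)
  show "mat_bracket n x ` poset_lie_alg R \<subseteq> mat.span (mat_unit ` Rel_nonC R)"
  proof clarify
    fix y :: "nat \<Rightarrow> nat \<Rightarrow> 'k"
    assume "y \<in> poset_lie_alg R"
    then have "mat_bracket n x y
        = (\<Sum>e\<in>Rel_nonC R. mat_scale (case_prod (mat_bracket n x y) e) (mat_unit e))"
      by (intro mat_eq_sum_mat_units[OF fin_nonC] mat_bracket_vanishes_off_Rel_nonC[OF assms(1,2) x])
    also have "\<dots> \<in> mat.span (mat_unit ` Rel_nonC R)"
      by (intro mat.span_sum mat.span_scale mat.span_base) auto
    finally show "mat_bracket n x y \<in> mat.span (mat_unit ` Rel_nonC R)" .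
  qed
qed

lemma breadth_le:
  assumes "L \<noteq> {}" and "\<And>x. x \<in> L \<Longrightarrow> ad_rank n L x \<le> b"
  shows "breadth n L \<le> b"
proof -
  have "finite (ad_rank n L ` L)"
    using assms(2) by (auto intro: finite_subset[of _ "{..b}"])
  then show ?thesis
    using assms unfolding breadth_def by simp
qed

theorem proposition5:
  fixes n :: nat and R :: "(nat \<times> nat) set"
  assumes "partial_order_on {1..n} R"
    and "\<And>x y. (x, y) \<in> R \<Longrightarrow> x \<le> y"
  defines "L \<equiv> (poset_lie_alg R :: (nat \<Rightarrow> nat \<Rightarrow> 'k::{alg_closed_field, field_char_0}) set)"
  shows "breadth n L \<le> card (strict_rel R - Rel_E {1..n} R) - 1 \<and>
         breadth n L \<le> card (Rel_nonC R)"
proof -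
  have "R \<subseteq> {1..n} \<times> {1..n}" and "antisym R" and "trans R"
    using assms(1) unfolding partial_order_on_def preorder_on_def by auto
  then have "strict_rel R \<subseteq> {1..n} \<times> {1..n}"
    unfolding strict_rel_def by auto
  then have fin: "finite (strict_rel R)"
    by (rule finite_subset) simp
  have "L \<noteq> {}"
    unfolding L_def poset_lie_alg_def by auto
  then show ?thesis
    unfolding L_def
    using ad_rank_le_card_diff_Rel_E[OF fin] ad_rank_le_card_Rel_nonC[OF \<open>antisym R\<close> \<open>trans R\<close> fin]
    by (blast intro: breadth_le)
qed

end
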